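(* On $(\mathbb C^2)^{\otimes3}$ (three parties, one qubit each) let $S_3=\mathrm{span}\{|000\rangle,\ |100\rangle-|010\rangle,\ |100\rangle+|010\rangle+|001\rangle\}$, a 3-dimensional subspace. Then $S_3$ is locally indistinguishable: no orthonormal basis of $S_3$ is perfectly distinguishable by LOCC.
   Context: "Perfectly distinguishable by LOCC": there is a finite-round protocol, in each round one party performing a local measurement and broadcasting the outcome, that identifies with probability 1 which state of the set was given. *)

theory Defs
  imports Complex_Main
begin

text \<open>A pure (possibly unnormalised) state of (C^2)^{\<otimes>3} is a function
  from computational basis labels (x1,x2,x3) to amplitudes; x1 belongs to party 0,
  x2 to party 1, x3 to party 2.\<close>

type_synonym state = "bool \<times> bool \<times> bool \<Rightarrow> complex"

text \<open>A local operator on one qubit (a 2x2 complex matrix, entries K out in).\<close>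
type_synonym qop = "bool \<Rightarrow> bool \<Rightarrow> complex"

definition ket :: "bool \<Rightarrow> bool \<Rightarrow> bool \<Rightarrow> state" where
  "ket a b c = (\<lambda>x. if x = (a, b, c) then 1 else 0)"

definition inner3 :: "state \<Rightarrow> state \<Rightarrow> complex" where
  "inner3 \<phi> \<psi> = (\<Sum>x\<in>UNIV. cnj (\<phi> x) * \<psi> x)"

definition apply_local :: "nat \<Rightarrow> qop \<Rightarrow> state \<Rightarrow> state" where
  "apply_local p K \<psi> = (\<lambda>(x1, x2, x3).
     if p = 0 then (\<Sum>b\<in>UNIV. K x1 b * \<psi> (b, x2, x3))
     else if p = 1 then (\<Sum>b\<in>UNIV. K x2 b * \<psi> (x1, b, x3))
     else (\<Sum>b\<in>UNIV. K x3 b * \<psi> (x1, x2, b)))"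

definition complete_meas :: "qop list \<Rightarrow> bool" where
  "complete_meas Ks \<longleftrightarrow>
     (\<forall>a c. (\<Sum>K\<leftarrow>Ks. \<Sum>b\<in>UNIV. cnj (K b a) * K b c) = (if a = c then 1 else 0))"

text \<open>Finite-round LOCC protocols: a finite tree. At an inner node one party p performs a
  local measurement with finitely many outcomes (Kraus operators), broadcasts the outcome
  and the protocol continues with the subprotocol attached to that outcome (so later
  measurements may depend on all previous outcomes). At a leaf a guess of the index of
  the state is announced.\<close>
datatype proto = Guess nat | Measure nat "(qop \<times> proto) list"

inductive wf_proto :: "proto \<Rightarrow> bool" where
  "wf_proto (Guess j)"
| "\<lbrakk> p < 3; complete_meas (map fst ms); \<forall>(K, q)\<in>set ms. wf_proto q \<rbrakk>
     \<Longrightarrow> wf_proto (Measure p ms)"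

text \<open>\<open>correct \<psi> i P\<close>: running P on the (unnormalised, post-measurement) state \<psi>,
  every leaf reached with nonzero probability guesses i.\<close>
inductive correct :: "state \<Rightarrow> nat \<Rightarrow> proto \<Rightarrow> bool" where
  "\<psi> = (\<lambda>_. 0) \<or> j = i \<Longrightarrow> correct \<psi> i (Guess j)"
| "\<forall>(K, q)\<in>set ms. correct (apply_local p K \<psi>) i q \<Longrightarrow> correct \<psi> i (Measure p ms)"

definition LOCC_distinguishable :: "nat \<Rightarrow> (nat \<Rightarrow> state) \<Rightarrow> bool" where
  "LOCC_distinguishable n \<psi> \<longleftrightarrow>
     (\<exists>P. wf_proto P \<and> (\<forall>i<n. correct (\<psi> i) i P))"

definition S3 :: "state set" where
  "S3 = {v. \<exists>a b c. v = (\<lambda>x. a * ket False False False x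
                     + b * (ket True False False x - ket False True False x)
                     + c * (ket True False False x + ket False True False x
                            + ket False False True x))}"

definition is_onb :: "state set \<Rightarrow> nat \<Rightarrow> (nat \<Rightarrow> state) \<Rightarrow> bool" where
  "is_onb S n \<psi> \<longleftrightarrow>
     (\<forall>i<n. \<psi> i \<in> S) \<and>
     (\<forall>i<n. \<forall>j<n. inner3 (\<psi> i) (\<psi> j) = (if i = j then 1 else 0)) \<and>
     (\<forall>v\<in>S. \<exists>c. v = (\<lambda>x. \<Sum>i<n. c i * \<psi> i x))"

end

theory Submission
  imports Defs
begin

(* Suppose an LOCC protocol perfectly distinguishes an orthonormal basis psi 0,
   psi 1, psi 2 of S3.  Every outcome of a local measurement is either an invertible Kraus
   operator, which we absorb into a frame of invertible local operators F (the invariant is that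
   the protocol distinguishes the states local3 F (psi j)), or a rank-one operator z r^T, after
   which the measuring party is decoupled and only two qubits remain entangled.  Completeness of
   the measurement gives (i) orthogonality of states that lead to different guesses and
   (ii) a resolution of the Gram matrix of the frame by the rank-one branches. *)

lemma sum_qubit: "(\<Sum>x\<in>(UNIV::bool set). f x) = f False + f True"
  by (simp add: UNIV_bool)

lemma sum_qubit2: "(\<Sum>x\<in>(UNIV::(bool \<times> bool) set). f x) =
   f (False, False) + f (False, True) + f (True, False) + f (True, True)"
proof -
  have univ: "(UNIV::(bool \<times> bool) set) = {(False, False), (False, True), (True, False), (True, True)}"
    by auto
  show ?thesis unfolding univ by (simp add: algebra_simps)
qed

lemma sum_qubit3: "(\<Sum>x\<in>(UNIV::(bool \<times> bool \<times> bool) set). f x) =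
   f (False,False,False) + f (False,False,True) + f (False,True,False) + f (False,True,True) +
   f (True,False,False) + f (True,False,True) + f (True,True,False) + f (True,True,True)"
proof -
  have univ: "(UNIV::(bool \<times> bool \<times> bool) set) = {(False,False,False), (False,False,True),
     (False,True,False), (False,True,True), (True,False,False), (True,False,True),
     (True,True,False), (True,True,True)}"
    by auto
  show ?thesis unfolding univ by (simp add: algebra_simps)
qed

lemma sum_list_linear4:
  "(\<Sum>K\<leftarrow>Ks. f1 K * c1 + f2 K * c2 + f3 K * c3 + f4 K * (c4::complex)) =
   (\<Sum>K\<leftarrow>Ks. f1 K) * c1 + (\<Sum>K\<leftarrow>Ks. f2 K) * c2 + (\<Sum>K\<leftarrow>Ks. f3 K) * c3 + (\<Sum>K\<leftarrow>Ks. f4 K) * c4"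
  by (induction Ks) (simp_all add: algebra_simps)

lemma sum_list_eq_0: "(\<And>x. x \<in> set xs \<Longrightarrow> f x = (0::complex)) \<Longrightarrow> (\<Sum>x\<leftarrow>xs. f x) = 0"
  by (induction xs) auto

lemma sum_list_nonzero_term: "(\<Sum>x\<leftarrow>xs. f x) \<noteq> (0::complex) \<Longrightarrow> \<exists>x\<in>set xs. f x \<noteq> 0"
  by (metis sum_list_eq_0)

lemma sum_cnj_self_eq_0:
  assumes "finite A" and "(\<Sum>x\<in>A. cnj (f x) * f x) = 0" and "x \<in> A"
  shows "f x = (0::complex)"
proof -
  have sq: "cnj z * z = of_real ((cmod z)^2)" for z
    using complex_norm_square[of z] by (simp only: mult.commute)
  have "of_real (\<Sum>x\<in>A. (cmod (f x))^2) = (0::complex)"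
    using assms(2) by (simp add: sq)
  then have "(\<Sum>x\<in>A. (cmod (f x))^2) = 0" by (simp only: of_real_eq_0_iff)
  then have "(cmod (f x))^2 = 0"
    using assms(1,3) by (subst (asm) sum_nonneg_eq_0_iff) auto
  then show ?thesis by simp
qed

lemma inner3_self_eq_0: "inner3 \<phi> \<phi> = 0 \<Longrightarrow> \<phi> = (\<lambda>_. 0)"
proof
  fix x
  assume "inner3 \<phi> \<phi> = 0"
  then show "\<phi> x = 0"
    unfolding inner3_def by (rule sum_cnj_self_eq_0[OF finite]) simp
qed

definition gram :: "qop \<Rightarrow> qop" where
  "gram K a c = (\<Sum>b\<in>UNIV. cnj (K b a) * K b c)"

definition marginal :: "nat \<Rightarrow> state \<Rightarrow> state \<Rightarrow> bool \<Rightarrow> bool \<Rightarrow> complex" where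
  "marginal p \<phi> \<chi> a c =
     (if p = 0 then (\<Sum>y\<in>UNIV. \<Sum>z\<in>UNIV. cnj (\<phi> (a,y,z)) * \<chi> (c,y,z))
      else if p = 1 then (\<Sum>y\<in>UNIV. \<Sum>z\<in>UNIV. cnj (\<phi> (y,a,z)) * \<chi> (y,c,z))
      else (\<Sum>y\<in>UNIV. \<Sum>z\<in>UNIV. cnj (\<phi> (y,z,a)) * \<chi> (y,z,c)))"

lemma inner3_apply_local:
  "inner3 (apply_local p K \<phi>) (apply_local p K \<chi>) =
     gram K False False * marginal p \<phi> \<chi> False False + gram K False True * marginal p \<phi> \<chi> False True +
     gram K True False * marginal p \<phi> \<chi> True False + gram K True True * marginal p \<phi> \<chi> True True"
  unfolding inner3_def apply_local_def gram_def marginal_def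
  by (simp add: sum_qubit3 sum_qubit algebra_simps)

lemma inner3_marginal: "inner3 \<phi> \<chi> = marginal p \<phi> \<chi> False False + marginal p \<phi> \<chi> True True"
  unfolding inner3_def marginal_def by (simp add: sum_qubit3 sum_qubit algebra_simps)

lemma complete_meas_gram:
  "complete_meas Ks \<Longrightarrow> (\<Sum>K\<leftarrow>Ks. gram K a c) = (if a = c then 1 else 0)"
  unfolding complete_meas_def gram_def by simp

lemma inner3_measurement_split:
  assumes "complete_meas Ks"
  shows "inner3 \<phi> \<chi> = (\<Sum>K\<leftarrow>Ks. inner3 (apply_local p K \<phi>) (apply_local p K \<chi>))"
  unfolding inner3_apply_local sum_list_linear4 complete_meas_gram[OF assms]
  by (simp add: inner3_marginal[of _ _ p])

lemma correct_Measure_branch: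
  "correct \<psi> i (Measure p ms) \<Longrightarrow> (K, q) \<in> set ms \<Longrightarrow> correct (apply_local p K \<psi>) i q"
  by (auto elim: correct.cases)

text \<open>States on which a protocol makes different guesses are orthogonal: the inner product splits
  over the branches, and at a leaf one of the two states vanishes.\<close>
lemma correct_orthogonal:
  assumes "wf_proto P"
  shows "correct \<phi> i P \<Longrightarrow> correct \<chi> j P \<Longrightarrow> i \<noteq> j \<Longrightarrow> inner3 \<phi> \<chi> = 0"
  using assms
proof (induction P arbitrary: \<phi> \<chi> rule: wf_proto.induct)
  case (1 g)
  then show ?case by (auto elim!: correct.cases simp: inner3_def)
next
  case (2 p ms)
  have "inner3 \<phi> \<chi> = (\<Sum>K\<leftarrow>map fst ms. inner3 (apply_local p K \<phi>) (apply_local p K \<chi>))"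
    by (rule inner3_measurement_split[OF 2(2)])
  also have "\<dots> = (\<Sum>(K, q)\<leftarrow>ms. inner3 (apply_local p K \<phi>) (apply_local p K \<chi>))"
    by (simp add: comp_def split_def)
  also have "\<dots> = 0"
    by (rule sum_list_eq_0) (use 2 correct_Measure_branch in fastforce)
  finally show ?case .
qed

lemma exists_nonzero_branch:
  assumes "complete_meas Ks" and "\<phi> \<noteq> (\<lambda>_. 0)"
  shows "\<exists>K\<in>set Ks. apply_local p K \<phi> \<noteq> (\<lambda>_. 0)"
proof (rule ccontr)
  assume "\<not> ?thesis"
  then have "(\<Sum>K\<leftarrow>Ks. inner3 (apply_local p K \<phi>) (apply_local p K \<phi>)) = 0"
    by (intro sum_list_eq_0) (auto simp: inner3_def)
  then have "inner3 \<phi> \<phi> = 0" using inner3_measurement_split[OF assms(1)] by simp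
  then show False using assms(2) inner3_self_eq_0 by blast
qed

section \<open>Linear algebra on one qubit\<close>

definition inner1 :: "(bool \<Rightarrow> complex) \<Rightarrow> (bool \<Rightarrow> complex) \<Rightarrow> complex" where
  "inner1 x y = (\<Sum>b\<in>UNIV. cnj (x b) * y b)"

definition det2 :: "qop \<Rightarrow> complex" where
  "det2 K = K False False * K True True - K False True * K True False"

definition qapply :: "qop \<Rightarrow> (bool \<Rightarrow> complex) \<Rightarrow> bool \<Rightarrow> complex" where
  "qapply K x a = K a False * x False + K a True * x True"

definition qmult :: "qop \<Rightarrow> qop \<Rightarrow> qop" where
  "qmult K B a c = K a False * B False c + K a True * B True c"

definition outer :: "(bool \<Rightarrow> complex) \<Rightarrow> (bool \<Rightarrow> complex) \<Rightarrow> qop" where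
  "outer z r a b = z a * r b"

definition row_mult :: "(bool \<Rightarrow> complex) \<Rightarrow> qop \<Rightarrow> bool \<Rightarrow> complex" where
  "row_mult r B c = r False * B False c + r True * B True c"

lemma inner1_expand: "inner1 x y = cnj (x False) * y False + cnj (x True) * y True"
  by (simp add: inner1_def sum_qubit)

lemma inner1_swap: "inner1 y x = cnj (inner1 x y)"
  by (simp add: inner1_expand algebra_simps)

lemma inner1_self_eq_0: "inner1 x x = 0 \<Longrightarrow> x = (\<lambda>_. 0)"
  unfolding inner1_def using sum_cnj_self_eq_0[OF finite, of x] by auto

lemma orthogonal_to_independent_eq_0:
  assumes "inner1 v1 y = 0" "inner1 v2 y = 0" "v1 False * v2 True - v2 False * v1 True \<noteq> 0"
  shows "y = (\<lambda>_. 0)"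
proof -
  let ?d = "cnj (v1 False * v2 True - v2 False * v1 True)"
  have e1: "cnj (v1 False) * y False + cnj (v1 True) * y True = 0" using assms(1) by (simp add: inner1_expand)
  have e2: "cnj (v2 False) * y False + cnj (v2 True) * y True = 0" using assms(2) by (simp add: inner1_expand)
  have "?d * y False = cnj (v2 True) * (cnj (v1 False) * y False + cnj (v1 True) * y True)
                      - cnj (v1 True) * (cnj (v2 False) * y False + cnj (v2 True) * y True)"
    by (simp add: algebra_simps)
  then have "?d * y False = 0" using e1 e2 by simp
  moreover have "?d * y True = cnj (v1 False) * (cnj (v2 False) * y False + cnj (v2 True) * y True)
                      - cnj (v2 False) * (cnj (v1 False) * y False + cnj (v1 True) * y True)"
    by (simp add: algebra_simps)
  then have "?d * y True = 0" using e1 e2 by simp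
  moreover have "?d \<noteq> 0" using assms(3) by (subst complex_cnj_zero_iff)
  ultimately show ?thesis by (auto simp: fun_eq_iff all_bool_eq)
qed

lemma orthogonal_independent:
  assumes orth: "inner1 v w = 0" and v: "v \<noteq> (\<lambda>_. 0)" and w: "w \<noteq> (\<lambda>_. 0)"
  shows "v False * w True - w False * v True \<noteq> 0"
proof
  assume dep: "v False * w True - w False * v True = 0"
  have e: "cnj (v False) * w False + cnj (v True) * w True = 0" using orth by (simp add: inner1_expand)
  have "inner1 v v * w False =
      v False * (cnj (v False) * w False + cnj (v True) * w True) - cnj (v True) * (v False * w True - w False * v True)"
    by (simp add: inner1_expand algebra_simps)
  then have "inner1 v v * w False = 0" using e dep by simp
  moreover have "inner1 v v * w True =
      v True * (cnj (v False) * w False + cnj (v True) * w True) + cnj (v False) * (v False * w True - w False * v True)"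
    by (simp add: inner1_expand algebra_simps)
  then have "inner1 v v * w True = 0" using e dep by simp
  moreover have "inner1 v v \<noteq> 0" using v inner1_self_eq_0 by blast
  ultimately have "w = (\<lambda>_. 0)" by (auto simp: fun_eq_iff all_bool_eq)
  with w show False by simp
qed

lemma three_orthogonal_vectors:
  assumes "inner1 u v = 0" "inner1 u w = 0" "inner1 v w = 0"
  shows "u = (\<lambda>_. 0) \<or> v = (\<lambda>_. 0) \<or> w = (\<lambda>_. 0)"
proof (rule ccontr)
  assume "\<not> ?thesis"
  then have "v False * w True - w False * v True \<noteq> 0" "u \<noteq> (\<lambda>_. 0)"
    using orthogonal_independent[OF assms(3)] by auto
  moreover have "inner1 v u = 0" "inner1 w u = 0"
    using assms(1,2) inner1_swap by (metis complex_cnj_zero)+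
  ultimately show False using orthogonal_to_independent_eq_0 by blast
qed

lemma det2_qmult: "det2 (qmult K B) = det2 K * det2 B"
  by (simp add: det2_def qmult_def algebra_simps)

lemma qapply_inj:
  assumes d: "det2 B \<noteq> 0" and h: "qapply B x = (\<lambda>_. 0)"
  shows "x = (\<lambda>_. 0)"
proof -
  have e1: "B False False * x False + B False True * x True = 0"
   and e2: "B True False * x False + B True True * x True = 0"
    using h by (simp_all add: qapply_def fun_eq_iff)
  have "det2 B * x False = B True True * (B False False * x False + B False True * x True)
        - B False True * (B True False * x False + B True True * x True)"
    by (simp add: det2_def algebra_simps)
  then have "det2 B * x False = 0" using e1 e2 by simp
  moreover have "det2 B * x True = B False False * (B True False * x False + B True True * x True)
        - B True False * (B False False * x False + B False True * x True)"
    by (simp add: det2_def algebra_simps)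
  then have "det2 B * x True = 0" using e1 e2 by simp
  ultimately show ?thesis using d by (auto simp: fun_eq_iff all_bool_eq)
qed

lemma det2_gram: "det2 (gram B) = cnj (det2 B) * det2 B"
  by (simp add: det2_def gram_def sum_qubit algebra_simps)

lemma gram_diag_nonzero:
  assumes "det2 B \<noteq> 0"
  shows "gram B False False \<noteq> 0"
proof
  assume "gram B False False = 0"
  then have "inner1 (\<lambda>a. B a False) (\<lambda>a. B a False) = 0"
    by (simp add: gram_def inner1_def)
  then have "B False False = 0 \<and> B True False = 0"
    by (auto dest!: inner1_self_eq_0 simp: fun_eq_iff)
  with assms show False by (simp add: det2_def)
qed

lemma gram_outer: "gram (outer z r) a c = inner1 z z * (cnj (r a) * r c)"
  by (simp add: gram_def outer_def inner1_def sum_qubit algebra_simps)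

lemma qmult_outer: "qmult (outer z r) A = outer z (row_mult r A)"
  by (simp add: qmult_def outer_def row_mult_def fun_eq_iff algebra_simps)

lemma singular_outer:
  assumes d: "det2 K = 0"
  shows "\<exists>z r. K = outer z r"
proof (cases "K False False \<noteq> 0 \<or> K True False \<noteq> 0")
  case True
  let ?r = "\<lambda>b. if b then (if K False False \<noteq> 0 then K False True / K False False
                            else K True True / K True False) else 1"
  have "K = outer (\<lambda>a. K a False) ?r"
    using d True by (auto simp: outer_def fun_eq_iff det2_def field_simps all_bool_eq)
  then show ?thesis by blast
next
  case False
  then have "K = outer (\<lambda>a. K a True) (\<lambda>b. if b then 1 else 0)"
    by (auto simp: outer_def fun_eq_iff all_bool_eq)
  then show ?thesis by blast
qed

definition left_factor :: "qop \<Rightarrow> bool \<Rightarrow> complex" where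
  "left_factor K = (SOME z. \<exists>r. K = outer z r)"

definition right_factor :: "qop \<Rightarrow> bool \<Rightarrow> complex" where
  "right_factor K = (SOME r. K = outer (left_factor K) r)"

lemma outer_factors: "det2 K = 0 \<Longrightarrow> K = outer (left_factor K) (right_factor K)"
proof -
  assume "det2 K = 0"
  then have "\<exists>z r. K = outer z r" by (rule singular_outer)
  then have "\<exists>r. K = outer (left_factor K) r" unfolding left_factor_def by (rule someI_ex)
  then show ?thesis unfolding right_factor_def by (rule someI_ex)
qed

section \<open>Two-qubit states\<close>

type_synonym state2 = "bool \<Rightarrow> bool \<Rightarrow> complex"

definition inner2 :: "state2 \<Rightarrow> state2 \<Rightarrow> complex" where
  "inner2 \<chi> \<omega> = (\<Sum>(b, c)\<in>UNIV. cnj (\<chi> b c) * \<omega> b c)"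

definition op_left :: "qop \<Rightarrow> state2 \<Rightarrow> state2" where
  "op_left K \<chi> b c = K b False * \<chi> False c + K b True * \<chi> True c"

definition op_right :: "qop \<Rightarrow> state2 \<Rightarrow> state2" where
  "op_right K \<chi> b c = K c False * \<chi> b False + K c True * \<chi> b True"

definition op2 :: "qop \<Rightarrow> qop \<Rightarrow> state2 \<Rightarrow> state2" where
  "op2 B C \<eta> = op_left B (op_right C \<eta>)"

definition swap2 :: "state2 \<Rightarrow> state2" where
  "swap2 \<chi> b c = \<chi> c b"

definition contract :: "(bool \<Rightarrow> complex) \<Rightarrow> state2 \<Rightarrow> bool \<Rightarrow> complex" where
  "contract r \<chi> c = r False * \<chi> False c + r True * \<chi> True c"

lemma inner2_expand: "inner2 \<chi> \<omega> = cnj (\<chi> False False) * \<omega> False False + cnj (\<chi> False True) * \<omega> False True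
     + cnj (\<chi> True False) * \<omega> True False + cnj (\<chi> True True) * \<omega> True True"
  by (simp add: inner2_def sum_qubit2)

lemma inner2_self_eq_0: "inner2 \<chi> \<chi> = 0 \<Longrightarrow> \<chi> = (\<lambda>_ _. 0)"
proof (intro ext)
  fix b c
  assume "inner2 \<chi> \<chi> = 0"
  then have "(\<Sum>x\<in>UNIV. cnj (case_prod \<chi> x) * case_prod \<chi> x) = 0"
    by (simp add: inner2_def case_prod_beta)
  then show "\<chi> b c = 0"
    using sum_cnj_self_eq_0[of UNIV "case_prod \<chi>" "(b, c)"] by simp
qed

lemma op_left_op_left: "op_left K (op_left B \<chi>) = op_left (qmult K B) \<chi>"
  by (simp add: op_left_def qmult_def fun_eq_iff algebra_simps)

lemma op_right_op_right: "op_right K (op_right B \<chi>) = op_right (qmult K B) \<chi>"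
  by (simp add: op_right_def qmult_def fun_eq_iff algebra_simps)

lemma op_left_op_right: "op_left K (op_right C \<chi>) = op_right C (op_left K \<chi>)"
  by (simp add: op_right_def op_left_def fun_eq_iff algebra_simps)

lemma op_left_inj: "det2 B \<noteq> 0 \<Longrightarrow> op_left B \<chi> = (\<lambda>_ _. 0) \<Longrightarrow> \<chi> = (\<lambda>_ _. 0)"
  using qapply_inj[of B "\<lambda>b. \<chi> b c" for c]
  by (simp add: op_left_def qapply_def fun_eq_iff)

lemma op_right_inj: "det2 B \<noteq> 0 \<Longrightarrow> op_right B \<chi> = (\<lambda>_ _. 0) \<Longrightarrow> \<chi> = (\<lambda>_ _. 0)"
  using qapply_inj[of B "\<chi> b" for b]
  by (simp add: op_right_def qapply_def fun_eq_iff)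

lemma op2_nonzero:
  "det2 B \<noteq> 0 \<Longrightarrow> det2 C \<noteq> 0 \<Longrightarrow> \<eta> \<noteq> (\<lambda>_ _. 0) \<Longrightarrow> op2 B C \<eta> \<noteq> (\<lambda>_ _. 0)"
  unfolding op2_def using op_left_inj op_right_inj by blast

lemma op2_swap2: "op2 B C \<eta> = swap2 (op2 C B (swap2 \<eta>))"
  by (simp add: op2_def op_left_def op_right_def swap2_def fun_eq_iff algebra_simps)

lemma op_right_op2_swap2: "op_right K (op2 B C \<eta>) = swap2 (op_left K (op2 C B (swap2 \<eta>)))"
  by (simp add: op2_def op_left_def op_right_def swap2_def fun_eq_iff algebra_simps)

lemma inner2_swap2: "inner2 (swap2 \<chi>) (swap2 \<omega>) = inner2 \<chi> \<omega>"
  by (simp add: swap2_def inner2_expand algebra_simps)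

lemma inner2_op2_swap2: "inner2 (op2 C B (swap2 \<eta>)) (op2 C B (swap2 \<eta>')) = inner2 (op2 B C \<eta>) (op2 B C \<eta>')"
  by (simp add: op2_swap2[of B C] inner2_swap2)

lemma op_left_outer: "op_left (outer z r) \<chi> = (\<lambda>b c. z b * contract r \<chi> c)"
  by (simp add: op_left_def outer_def contract_def fun_eq_iff algebra_simps)

lemma contract_op_left: "contract r (op_left B \<chi>) = contract (row_mult r B) \<chi>"
  by (simp add: op_left_def row_mult_def contract_def fun_eq_iff algebra_simps)

lemma contract_op_right: "contract r (op_right C \<chi>) = qapply C (contract r \<chi>)"
  by (simp add: op_right_def qapply_def contract_def fun_eq_iff algebra_simps)

lemma inner2_product: "inner2 (\<lambda>b c. z b * u c) (\<lambda>b c. z b * v c) = inner1 z z * inner1 u v"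
  by (simp add: inner2_expand inner1_expand algebra_simps)

section \<open>Three-qubit states with one party decoupled\<close>

lemma less3_cases: "(p::nat) < 3 \<Longrightarrow> p = 0 \<or> p = 1 \<or> p = 2"
  by auto

definition first_other :: "nat \<Rightarrow> nat" where
  "first_other p = (if p = 0 then 1 else 0)"

definition second_other :: "nat \<Rightarrow> nat" where
  "second_other p = (if p = 2 then 1 else 2)"

lemma party_cases: "p < 3 \<Longrightarrow> p' < 3 \<Longrightarrow> p' = p \<or> p' = first_other p \<or> p' = second_other p"
  unfolding first_other_def second_other_def by auto

definition decoupled :: "nat \<Rightarrow> (bool \<Rightarrow> complex) \<Rightarrow> state2 \<Rightarrow> state" where
  "decoupled p x \<chi> = (\<lambda>(a, b, c). if p = 0 then x a * \<chi> b c else if p = 1 then x b * \<chi> a c else x c * \<chi> a b)"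

lemma apply_local_decoupled_self:
  "p < 3 \<Longrightarrow> apply_local p K (decoupled p x \<chi>) = decoupled p (qapply K x) \<chi>"
  by (drule less3_cases) (auto simp: apply_local_def decoupled_def qapply_def fun_eq_iff sum_qubit algebra_simps)

lemma apply_local_decoupled_first:
  "p < 3 \<Longrightarrow> apply_local (first_other p) K (decoupled p x \<chi>) = decoupled p x (op_left K \<chi>)"
  by (drule less3_cases)
     (auto simp: apply_local_def decoupled_def op_left_def first_other_def fun_eq_iff sum_qubit algebra_simps)

lemma apply_local_decoupled_second:
  "p < 3 \<Longrightarrow> apply_local (second_other p) K (decoupled p x \<chi>) = decoupled p x (op_right K \<chi>)"
  by (drule less3_cases)
     (auto simp: apply_local_def decoupled_def op_right_def second_other_def fun_eq_iff sum_qubit algebra_simps)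

lemma inner3_decoupled:
  "p < 3 \<Longrightarrow> inner3 (decoupled p x \<chi>) (decoupled p y \<omega>) = inner1 x y * inner2 \<chi> \<omega>"
  by (drule less3_cases)
     (auto simp: inner3_def decoupled_def inner1_expand inner2_expand sum_qubit3 algebra_simps)

lemma inner3_decoupled_eq_0:
  "p < 3 \<Longrightarrow> x \<noteq> (\<lambda>_. 0) \<Longrightarrow> inner3 (decoupled p x \<chi>) (decoupled p x \<omega>) = 0 \<Longrightarrow> inner2 \<chi> \<omega> = 0"
  using inner3_decoupled inner1_self_eq_0 by fastforce

lemma decoupled_nonzero:
  assumes p: "p < 3" and x: "x \<noteq> (\<lambda>_. 0)" and \<chi>: "\<chi> \<noteq> (\<lambda>_ _. 0)"
  shows "decoupled p x \<chi> \<noteq> (\<lambda>_. 0)"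
proof
  assume "decoupled p x \<chi> = (\<lambda>_. 0)"
  then have "inner1 x x * inner2 \<chi> \<chi> = 0"
    using inner3_decoupled[OF p, of x \<chi> x \<chi>] by (simp add: inner3_def)
  then show False using x \<chi> inner1_self_eq_0 inner2_self_eq_0 by auto
qed

lemma decoupled_zero: "decoupled p (\<lambda>_. 0) \<chi> = (\<lambda>_. 0)"
  by (auto simp: decoupled_def fun_eq_iff)

definition id2 :: qop where
  "id2 a b = (if a = b then 1 else 0)"

definition adj2 :: "qop \<Rightarrow> qop" where
  "adj2 K a b = (if a then (if b then K False False else - K True False)
                 else (if b then - K False True else K True True))"

lemma det2_id2: "det2 id2 = 1"
  by (simp add: det2_def id2_def)

lemma apply_local_id2: "apply_local p id2 \<phi> = \<phi>"
  by (auto simp: apply_local_def id2_def fun_eq_iff sum_qubit)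

lemma apply_local_qmult:
  "p < 3 \<Longrightarrow> apply_local p K (apply_local p K' \<phi>) = apply_local p (qmult K K') \<phi>"
  by (drule less3_cases) (auto simp: apply_local_def qmult_def fun_eq_iff sum_qubit algebra_simps)

lemma apply_local_commute:
  "apply_local 0 A (apply_local 1 B X) = apply_local 1 B (apply_local 0 A X)"
  "apply_local 0 A (apply_local 2 C X) = apply_local 2 C (apply_local 0 A X)"
  "apply_local 1 B (apply_local 2 C X) = apply_local 2 C (apply_local 1 B X)"
  unfolding apply_local_def fun_eq_iff by (simp_all add: sum_qubit algebra_simps split: prod.splits)

text \<open>Invertible local operators act injectively: the adjugate undoes them up to the determinant.\<close>
lemma apply_local_adj2:
  "p < 3 \<Longrightarrow> apply_local p (adj2 K) (apply_local p K \<phi>) = (\<lambda>x. det2 K * \<phi> x)"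
  by (drule less3_cases)
     (auto simp: apply_local_def adj2_def det2_def fun_eq_iff sum_qubit algebra_simps)

lemma apply_local_inj:
  assumes "p < 3" "det2 K \<noteq> 0" "apply_local p K \<phi> = (\<lambda>_. 0)"
  shows "\<phi> = (\<lambda>_. 0)"
proof -
  have "(\<lambda>x. det2 K * \<phi> x) = apply_local p (adj2 K) (\<lambda>_. 0)"
    using apply_local_adj2[OF assms(1)] assms(3) by metis
  also have "\<dots> = (\<lambda>_. 0)" by (auto simp: apply_local_def fun_eq_iff)
  finally show ?thesis using assms(2) by (simp add: fun_eq_iff)
qed

definition local3 :: "(nat \<Rightarrow> qop) \<Rightarrow> state \<Rightarrow> state" where
  "local3 F \<psi> = apply_local 0 (F 0) (apply_local 1 (F 1) (apply_local 2 (F 2) \<psi>))"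

lemma local3_id2: "local3 (\<lambda>_. id2) \<psi> = \<psi>"
  by (simp add: local3_def apply_local_id2)

lemma local3_nonzero:
  assumes "\<forall>p<3. det2 (F p) \<noteq> 0" and "\<psi> \<noteq> (\<lambda>_. 0)"
  shows "local3 F \<psi> \<noteq> (\<lambda>_. 0)"
proof
  assume "local3 F \<psi> = (\<lambda>_. 0)"
  then have "apply_local 1 (F 1) (apply_local 2 (F 2) \<psi>) = (\<lambda>_. 0)"
    using apply_local_inj[of 0 "F 0"] assms(1) by (simp add: local3_def)
  then have "apply_local 2 (F 2) \<psi> = (\<lambda>_. 0)"
    using apply_local_inj[of 1 "F 1"] assms(1) by simp
  then have "\<psi> = (\<lambda>_. 0)"
    using apply_local_inj[of 2 "F 2"] assms(1) by simp
  with assms(2) show False by simp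
qed

lemma local3_reorder:
  assumes "p < 3"
  shows "local3 F \<psi> = apply_local p (F p) (apply_local (first_other p) (F (first_other p))
                (apply_local (second_other p) (F (second_other p)) \<psi>))"
  using less3_cases[OF assms]
proof (elim disjE)
  assume "p = 0"
  then show ?thesis by (simp add: local3_def first_other_def second_other_def)
next
  assume "p = 1"
  then show ?thesis by (simp add: local3_def first_other_def second_other_def apply_local_commute(1)[simplified])
next
  assume "p = 2"
  then show ?thesis by (simp add: local3_def first_other_def second_other_def apply_local_commute(2,3)[simplified])
qed

lemma local3_absorb:
  assumes "p < 3"
  shows "apply_local p K (local3 F \<psi>) = local3 (F(p := qmult K (F p))) \<psi>"
proof -
  have "first_other p \<noteq> p" "second_other p \<noteq> p"
    by (auto simp: first_other_def second_other_def)
  then show ?thesis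
    using assms by (simp add: local3_reorder[OF assms] apply_local_qmult)
qed

definition contract_party :: "nat \<Rightarrow> (bool \<Rightarrow> complex) \<Rightarrow> state \<Rightarrow> state2" where
  "contract_party p \<rho> \<psi> b c =
     (if p = 0 then \<rho> False * \<psi> (False, b, c) + \<rho> True * \<psi> (True, b, c)
      else if p = 1 then \<rho> False * \<psi> (b, False, c) + \<rho> True * \<psi> (b, True, c)
      else \<rho> False * \<psi> (b, c, False) + \<rho> True * \<psi> (b, c, True))"

lemma apply_local_outer:
  "p < 3 \<Longrightarrow> apply_local p (outer z \<rho>) \<phi> = decoupled p z (contract_party p \<rho> \<phi>)"
  by (drule less3_cases)
     (auto simp: apply_local_def decoupled_def outer_def contract_party_def fun_eq_iff sum_qubit algebra_simps)

lemma contract_party_first: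
  "p < 3 \<Longrightarrow> contract_party p \<rho> (apply_local (first_other p) B \<phi>) = op_left B (contract_party p \<rho> \<phi>)"
  by (drule less3_cases)
     (auto simp: apply_local_def contract_party_def op_left_def first_other_def fun_eq_iff sum_qubit algebra_simps)

lemma contract_party_second:
  "p < 3 \<Longrightarrow> contract_party p \<rho> (apply_local (second_other p) C \<phi>) = op_right C (contract_party p \<rho> \<phi>)"
  by (drule less3_cases)
     (auto simp: apply_local_def contract_party_def op_right_def second_other_def fun_eq_iff sum_qubit algebra_simps)

lemma local3_rank_one:
  assumes "p < 3" and "F p = outer z \<rho>"
  shows "local3 F \<psi> = decoupled p z (op2 (F (first_other p)) (F (second_other p)) (contract_party p \<rho> \<psi>))"
  using assms
  by (simp add: local3_reorder[OF assms(1)] apply_local_outer contract_party_first contract_party_second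
      op2_def op_left_op_right)

section \<open>Rank-one measurement rounds and 3 x 3 determinants\<close>

text \<open>A measurement by rank-one operators \<open>z r\<^sup>T\<close> preceded by an invertible operator \<open>A\<close> is
  summarised by the weights \<open>w = \<parallel>z\<parallel>\<^sup>2\<close> and the covectors \<open>\<rho> = r\<^sup>T A\<close>; completeness of the
  measurement says that these resolve the Gram matrix of \<open>A\<close>.\<close>
definition gram_resolution :: "(complex \<times> (bool \<Rightarrow> complex)) list \<Rightarrow> qop \<Rightarrow> bool" where
  "gram_resolution ch A \<longleftrightarrow> (\<forall>a c. (\<Sum>(w, \<rho>)\<leftarrow>ch. w * (cnj (\<rho> a) * \<rho> c)) = gram A a c)"

definition rank_one_branches :: "qop list \<Rightarrow> qop \<Rightarrow> (complex \<times> (bool \<Rightarrow> complex)) list" where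
  "rank_one_branches Ks A =
     map (\<lambda>K. (inner1 (left_factor K) (left_factor K), row_mult (right_factor K) A)) Ks"

lemma gram_resolution_rank_one_branches:
  assumes cm: "complete_meas Ks" and sg: "\<And>K. K \<in> set Ks \<Longrightarrow> det2 K = 0"
  shows "gram_resolution (rank_one_branches Ks A) A"
  unfolding gram_resolution_def
proof (intro allI)
  fix a c
  let ?t = "\<lambda>K. gram K False False * (cnj (A False a) * A False c) + gram K False True * (cnj (A False a) * A True c)
     + gram K True False * (cnj (A True a) * A False c) + gram K True True * (cnj (A True a) * A True c)"
  have "(\<Sum>(w, \<rho>)\<leftarrow>rank_one_branches Ks A. w * (cnj (\<rho> a) * \<rho> c)) =
     (\<Sum>K\<leftarrow>Ks. inner1 (left_factor K) (left_factor K) *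
        (cnj (row_mult (right_factor K) A a) * row_mult (right_factor K) A c))"
    by (simp add: rank_one_branches_def comp_def)
  also have "\<dots> = (\<Sum>K\<leftarrow>Ks. ?t K)"
  proof (rule arg_cong[where f = sum_list], rule map_cong[OF refl])
    fix K assume "K \<in> set Ks"
    then have "K = outer (left_factor K) (right_factor K)" using sg outer_factors by blast
    then have "gram K a' c' = inner1 (left_factor K) (left_factor K) * (cnj (right_factor K a') * right_factor K c')"
      for a' c' by (metis gram_outer)
    then show "inner1 (left_factor K) (left_factor K) *
        (cnj (row_mult (right_factor K) A a) * row_mult (right_factor K) A c) = ?t K"
      by (simp add: gram_outer row_mult_def algebra_simps)
  qed
  also have "\<dots> = gram A a c"
    unfolding sum_list_linear4 complete_meas_gram[OF cm] by (simp add: gram_def sum_qubit)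
  finally show "(\<Sum>(w, \<rho>)\<leftarrow>rank_one_branches Ks A. w * (cnj (\<rho> a) * \<rho> c)) = gram A a c" .
qed

lemma rank_one_branches_memD:
  "(w, \<rho>) \<in> set (rank_one_branches Ks A) \<Longrightarrow>
     \<exists>K\<in>set Ks. w = inner1 (left_factor K) (left_factor K) \<and> \<rho> = row_mult (right_factor K) A"
  by (auto simp: rank_one_branches_def)

lemma gram_resolution_first_nonzero:
  assumes "gram_resolution ch A" and "det2 A \<noteq> 0"
  obtains w \<rho> where "(w, \<rho>) \<in> set ch" "w \<noteq> 0" "\<rho> False \<noteq> 0"
proof -
  have "(\<Sum>(w, \<rho>)\<leftarrow>ch. w * (cnj (\<rho> False) * \<rho> False)) \<noteq> 0"
    using assms gram_diag_nonzero unfolding gram_resolution_def by simp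
  then obtain x where "x \<in> set ch" "(\<lambda>(w, \<rho>). w * (cnj (\<rho> False) * \<rho> False)) x \<noteq> 0"
    using sum_list_nonzero_term by blast
  moreover obtain w \<rho> where "x = (w, \<rho>)" by (rule prod.exhaust)
  ultimately show ?thesis using that by auto
qed

lemma gram_resolution_annihilated:
  assumes S: "gram_resolution ch A" and dA: "det2 A \<noteq> 0"
    and Z: "\<And>w \<rho>. (w, \<rho>) \<in> set ch \<Longrightarrow> w \<noteq> 0 \<Longrightarrow> \<rho> False * x False + \<rho> True * x True = 0"
  shows "x = (\<lambda>_. 0)"
proof (rule qapply_inj)
  show "det2 (gram A) \<noteq> 0" using dA by (simp add: det2_gram)
  have "(\<Sum>(w, \<rho>)\<leftarrow>ch. w * cnj (\<rho> a) * (\<rho> False * x False + \<rho> True * x True)) = 0" for a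
    by (rule sum_list_eq_0) (use Z in fastforce)
  moreover have "(\<Sum>(w, \<rho>)\<leftarrow>ch. w * cnj (\<rho> a) * (\<rho> False * x False + \<rho> True * x True)) =
      (\<Sum>(w, \<rho>)\<leftarrow>ch. w * (cnj (\<rho> a) * \<rho> False)) * x False
    + (\<Sum>(w, \<rho>)\<leftarrow>ch. w * (cnj (\<rho> a) * \<rho> True)) * x True" for a
    by (induction ch) (auto simp: algebra_simps)
  ultimately show "qapply (gram A) x = (\<lambda>_. 0)"
    using S by (simp add: gram_resolution_def qapply_def fun_eq_iff)
qed

definition det_rows :: "(nat \<Rightarrow> complex) \<Rightarrow> (nat \<Rightarrow> complex) \<Rightarrow> (nat \<Rightarrow> complex) \<Rightarrow> complex" where
  "det_rows \<alpha> Q R = \<alpha> 0 * (Q 1 * R 2 - Q 2 * R 1) - Q 0 * (\<alpha> 1 * R 2 - \<alpha> 2 * R 1)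
                    + R 0 * (\<alpha> 1 * Q 2 - \<alpha> 2 * Q 1)"

lemma det_rows_swap: "det_rows \<alpha> R Q = - det_rows \<alpha> Q R"
  by (simp add: det_rows_def algebra_simps)

lemma det_rows_zero_col: "(\<And>j. j < 3 \<Longrightarrow> R j = 0) \<Longrightarrow> det_rows \<alpha> Q R = 0"
  by (simp add: det_rows_def)

lemma det_rows_zero_row: "j < 3 \<Longrightarrow> \<alpha> j = 0 \<Longrightarrow> Q j = 0 \<Longrightarrow> R j = 0 \<Longrightarrow> det_rows \<alpha> Q R = 0"
  by (auto dest!: less3_cases simp: det_rows_def)

lemma det_rows_minor:
  assumes D: "det_rows \<alpha> Q R \<noteq> 0" and ij: "i < 3" "j < 3" "i \<noteq> j" and z: "R i = 0" "R j = 0"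
  shows "\<alpha> i * Q j - \<alpha> j * Q i \<noteq> 0"
proof
  assume h: "\<alpha> i * Q j - \<alpha> j * Q i = 0"
  from ij have "(i = 0 \<and> j = 1) \<or> (i = 1 \<and> j = 0) \<or> (i = 0 \<and> j = 2) \<or> (i = 2 \<and> j = 0) \<or>
       (i = 1 \<and> j = 2) \<or> (i = 2 \<and> j = 1)"
    by auto
  then have "det_rows \<alpha> Q R = 0"
    using z h by (elim disjE conjE) (simp_all add: det_rows_def algebra_simps)
  with D show False by simp
qed

section \<open>Bases of the two-qubit subspace spanned by 00, 10, 01\<close>

text \<open>Three two-qubit states forming a basis of \<open>span{|00\<rangle>, |10\<rangle>, |01\<rangle>}\<close>.\<close>
definition w_basis :: "(nat \<Rightarrow> state2) \<Rightarrow> bool" where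
  "w_basis \<eta> \<longleftrightarrow> (\<forall>j<3. \<eta> j True True = 0) \<and>
     det_rows (\<lambda>j. \<eta> j False False) (\<lambda>j. \<eta> j True False) (\<lambda>j. \<eta> j False True) \<noteq> 0"

lemma w_basis_nonzero: "w_basis \<eta> \<Longrightarrow> j < 3 \<Longrightarrow> \<eta> j \<noteq> (\<lambda>_ _. 0)"
  unfolding w_basis_def using det_rows_zero_row by fastforce

lemma w_basis_swap2: "w_basis \<eta> \<Longrightarrow> w_basis (\<lambda>k. swap2 (\<eta> k))"
  unfolding w_basis_def swap2_def
  using det_rows_swap[of "\<lambda>j. \<eta> j False False" "\<lambda>j. \<eta> j False True" "\<lambda>j. \<eta> j True False"] by simp

lemma inner2_op2_first_column:
  assumes "\<eta>1 False True = 0" "\<eta>1 True True = 0"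
  shows "inner2 (op2 B C \<eta>1) (op2 B C \<eta>) =
     inner1 (\<lambda>b. \<eta>1 b False) (qapply (gram B) (\<lambda>b. gram C False False * \<eta> b False + gram C False True * \<eta> b True))"
  using assms
  by (simp add: inner2_expand inner1_expand op2_def op_left_def op_right_def qapply_def gram_def sum_qubit
      algebra_simps)

lemma orthogonal_to_first_column:
  assumes z1: "\<eta>1 False True = 0" "\<eta>1 True True = 0" and z2: "\<eta>2 False True = 0" "\<eta>2 True True = 0"
    and z: "\<eta> True True = 0"
    and d: "\<eta>1 False False * \<eta>2 True False - \<eta>2 False False * \<eta>1 True False \<noteq> 0"
    and dB: "det2 B \<noteq> 0" and dC: "det2 C \<noteq> 0"
    and o1: "inner2 (op2 B C \<eta>1) (op2 B C \<eta>) = 0" and o2: "inner2 (op2 B C \<eta>2) (op2 B C \<eta>) = 0"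
  shows "\<eta> True False = 0"
proof -
  let ?Z = "\<lambda>b. gram C False False * \<eta> b False + gram C False True * \<eta> b True"
  have "qapply (gram B) ?Z = (\<lambda>_. 0)"
    by (rule orthogonal_to_independent_eq_0[of "\<lambda>b. \<eta>1 b False" _ "\<lambda>b. \<eta>2 b False"])
       (use o1 o2 inner2_op2_first_column[of \<eta>1 B C \<eta>, OF z1] inner2_op2_first_column[of \<eta>2 B C \<eta>, OF z2] d
         in simp_all)
  then have "?Z = (\<lambda>_. 0)" using qapply_inj[of "gram B"] dB by (simp add: det2_gram)
  then have "?Z True = 0" by (rule fun_cong)
  then have "gram C False False * \<eta> True False = 0" using z by simp
  then show ?thesis using gram_diag_nonzero[OF dC] by simp
qed

text \<open>After a rank-one outcome, the remaining qubit carries three pairwise orthogonal vectors,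
  so one of them must vanish.\<close>
lemma branch_annihilates_one:
  fixes \<eta> :: "nat \<Rightarrow> state2"
  assumes dC: "det2 C \<noteq> 0"
    and CH: "\<And>i k. i < 3 \<Longrightarrow> k < 3 \<Longrightarrow> i \<noteq> k \<Longrightarrow>
               inner1 (qapply C (contract \<rho> (\<eta> i))) (qapply C (contract \<rho> (\<eta> k))) = 0"
  shows "\<exists>k<3. contract \<rho> (\<eta> k) = (\<lambda>_. 0)"
proof -
  have "\<exists>k<3. qapply C (contract \<rho> (\<eta> k)) = (\<lambda>_. 0)"
    using three_orthogonal_vectors[OF CH[of 0 1] CH[of 0 2] CH[of 1 2]] by force
  then show ?thesis using qapply_inj[OF dC] by blast
qed

section \<open>The two-party lemma\<close>

lemma gram_resolution_annihilated_state:
  assumes S: "gram_resolution ch B" and dB: "det2 B \<noteq> 0"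
    and Z: "\<And>w \<rho>. (w, \<rho>) \<in> set ch \<Longrightarrow> w \<noteq> 0 \<Longrightarrow> contract \<rho> \<chi> = (\<lambda>_. 0)"
  shows "\<chi> = (\<lambda>_ _. 0)"
proof (intro ext)
  fix b c
  have "(\<lambda>b. \<chi> b c) = (\<lambda>_. 0)"
    by (rule gram_resolution_annihilated[OF S dB]) (use Z in \<open>force simp: contract_def fun_eq_iff\<close>)
  then show "\<chi> b c = 0" by (rule fun_cong)
qed

text \<open>A branch whose covector sees only \<open>|1\<rangle>\<close> keeps just the \<open>|10\<rangle>\<close> components; these must be
  orthogonal, so one of them vanishes.\<close>
lemma branch_sees_second:
  assumes "\<eta>1 True True = 0" "\<eta>2 True True = 0" "\<rho> False = 0" "\<rho> True \<noteq> 0" "det2 C \<noteq> 0"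
    and "inner1 (qapply C (contract \<rho> \<eta>1)) (qapply C (contract \<rho> \<eta>2)) = 0"
  shows "\<eta>1 True False = 0 \<or> \<eta>2 True False = 0"
proof -
  have "cnj (\<rho> True * \<eta>1 True False) * (\<rho> True * \<eta>2 True False) * gram C False False = 0"
    using assms(1-3,6) by (simp add: inner1_expand qapply_def contract_def gram_def sum_qubit algebra_simps)
  then show ?thesis using assms(4) gram_diag_nonzero[OF assms(5)] by simp
qed

lemma two_party_rank_one_round:
  fixes \<eta> :: "nat \<Rightarrow> state2"
  assumes W: "w_basis \<eta>" and dB: "det2 B \<noteq> 0" and dC: "det2 C \<noteq> 0"
    and O: "\<And>i k. i < 3 \<Longrightarrow> k < 3 \<Longrightarrow> i \<noteq> k \<Longrightarrow> inner2 (op2 B C (\<eta> i)) (op2 B C (\<eta> k)) = 0"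
    and S: "gram_resolution ch B"
    and CH: "\<And>w \<rho> i k. (w, \<rho>) \<in> set ch \<Longrightarrow> w \<noteq> 0 \<Longrightarrow> i < 3 \<Longrightarrow> k < 3 \<Longrightarrow> i \<noteq> k \<Longrightarrow>
               inner1 (qapply C (contract \<rho> (\<eta> i))) (qapply C (contract \<rho> (\<eta> k))) = 0"
    and j: "j < 3"
  shows "\<eta> j False True * \<eta> j True False = 0"
proof -
  have R: "\<And>k. k < 3 \<Longrightarrow> \<eta> k True True = 0"
    and D: "det_rows (\<lambda>j. \<eta> j False False) (\<lambda>j. \<eta> j True False) (\<lambda>j. \<eta> j False True) \<noteq> 0"
    using W by (auto simp: w_basis_def)
  (* every branch of positive weight annihilates one of the states; if the branch sees |0>, that
     state has no |01> component *)
  have kills: "\<exists>k<3. contract \<rho> (\<eta> k) = (\<lambda>_. 0)" if "(w, \<rho>) \<in> set ch" "w \<noteq> 0" for w \<rho>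
    by (rule branch_annihilates_one[OF dC CH[OF that]])
  have kills_01: "\<eta> k False True = 0" if "\<rho> False \<noteq> 0" "contract \<rho> (\<eta> k) = (\<lambda>_. 0)" "k < 3" for \<rho> k
    using fun_cong[OF that(2), of True] R[OF that(3)] that(1) by (simp add: contract_def)
  obtain w0 \<rho>0 where w0: "(w0, \<rho>0) \<in> set ch" "w0 \<noteq> 0" "\<rho>0 False \<noteq> 0"
    using gram_resolution_first_nonzero[OF S dB] by blast
  obtain j3 where j3: "j3 < 3" "contract \<rho>0 (\<eta> j3) = (\<lambda>_. 0)" using kills[OF w0(1,2)] by blast
  have j3_01: "\<eta> j3 False True = 0" using kills_01[OF w0(3) j3(2,1)] .
  (* either some branch sees only |1>, or two states lack a |01> component, or eta j3 is the only
     such state and then every branch annihilates it *)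
  consider (second) w \<rho> where "(w, \<rho>) \<in> set ch" "w \<noteq> 0" "\<rho> False = 0" "\<rho> True \<noteq> 0"
    | (pair) j1 j2 where "j1 < 3" "j2 < 3" "j1 \<noteq> j2" "\<eta> j1 False True = 0" "\<eta> j2 False True = 0"
    | (unique) "\<And>w \<rho>. (w, \<rho>) \<in> set ch \<Longrightarrow> w \<noteq> 0 \<Longrightarrow> \<rho> False = 0 \<Longrightarrow> \<rho> True = 0"
        "\<And>k. k < 3 \<Longrightarrow> \<eta> k False True = 0 \<Longrightarrow> k = j3"
    using j3(1) j3_01 by metis
  then show ?thesis
  proof cases
    case second
    have one_10: "\<eta> i True False = 0 \<or> \<eta> k True False = 0" if "i < 3" "k < 3" "i \<noteq> k" for i k
      by (rule branch_sees_second[OF R R second(3,4) dC CH[OF second(1,2) that]]) (use that in auto)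
    show ?thesis
    proof (cases "\<eta> j True False = 0 \<or> j = j3")
      case False
      then have "\<eta> j3 True False = 0" using one_10[OF j j3(1)] by auto
      moreover have "\<rho>0 False * \<eta> j3 False False + \<rho>0 True * \<eta> j3 True False = 0"
        using fun_cong[OF j3(2), of False] by (simp add: contract_def)
      ultimately have "\<eta> j3 False False = 0" using w0(3) by simp
      then have False using D det_rows_zero_row[OF j3(1)] j3_01 \<open>\<eta> j3 True False = 0\<close> by simp
      then show ?thesis ..
    qed (use j3_01 in auto)
  next
    case pair
    show ?thesis
    proof (cases "j = j1 \<or> j = j2")
      case False
      have "\<eta> j True False = 0"
        by (rule orthogonal_to_first_column[of "\<eta> j1" "\<eta> j2" "\<eta> j" B C])
           (use pair R j False dB dC O det_rows_minor[OF D pair(1,2,3,4,5)] in auto)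
      then show ?thesis by simp
    qed (use pair in auto)
  next
    case unique
    have "contract \<rho> (\<eta> j3) = (\<lambda>_. 0)" if wr: "(w, \<rho>) \<in> set ch" "w \<noteq> 0" for w \<rho>
    proof (cases "\<rho> False = 0")
      case True
      then show ?thesis using unique(1)[OF wr True] by (simp add: contract_def fun_eq_iff)
    next
      case False
      obtain k where k: "k < 3" "contract \<rho> (\<eta> k) = (\<lambda>_. 0)" using kills[OF wr] by blast
      then have "k = j3" using unique(2) kills_01[of \<rho> k] False by blast
      then show ?thesis using k by simp
    qed
    then have "\<eta> j3 = (\<lambda>_ _. 0)" by (rule gram_resolution_annihilated_state[OF S dB])
    then show ?thesis using w_basis_nonzero[OF W j3(1)] by simp
  qed
qed

lemma two_party_singular_first:
  fixes \<eta> :: "nat \<Rightarrow> state2"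
  assumes W: "w_basis \<eta>" and dB: "det2 B \<noteq> 0" and dC: "det2 C \<noteq> 0"
    and O: "\<And>i k. i < 3 \<Longrightarrow> k < 3 \<Longrightarrow> i \<noteq> k \<Longrightarrow> inner2 (op2 B C (\<eta> i)) (op2 B C (\<eta> k)) = 0"
    and cm: "complete_meas Ks" and sg: "\<And>K. K \<in> set Ks \<Longrightarrow> det2 K = 0"
    and CO: "\<And>K i k. K \<in> set Ks \<Longrightarrow> i < 3 \<Longrightarrow> k < 3 \<Longrightarrow> i \<noteq> k \<Longrightarrow>
               inner2 (op_left K (op2 B C (\<eta> i))) (op_left K (op2 B C (\<eta> k))) = 0"
    and j: "j < 3"
  shows "\<eta> j False True * \<eta> j True False = 0"
proof (rule two_party_rank_one_round[OF W dB dC O gram_resolution_rank_one_branches[OF cm sg] _ j])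
  fix w \<rho> and i k :: nat
  assume wr: "(w, \<rho>) \<in> set (rank_one_branches Ks B)" "w \<noteq> 0" and ik: "i < 3" "k < 3" "i \<noteq> k"
  obtain K where K: "K \<in> set Ks" "w = inner1 (left_factor K) (left_factor K)"
    "\<rho> = row_mult (right_factor K) B"
    using rank_one_branches_memD[OF wr(1)] by blast
  have "op_left K (op2 B C (\<eta> l)) = (\<lambda>b c. left_factor K b * qapply C (contract \<rho> (\<eta> l)) c)" for l
    by (subst outer_factors[OF sg[OF K(1)]])
       (simp add: op_left_outer op2_def contract_op_left contract_op_right K(3))
  then have "w * inner1 (qapply C (contract \<rho> (\<eta> i))) (qapply C (contract \<rho> (\<eta> k))) = 0"
    using CO[OF K(1) ik] by (simp add: inner2_product K(2))
  then show "inner1 (qapply C (contract \<rho> (\<eta> i))) (qapply C (contract \<rho> (\<eta> k))) = 0"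
    using wr(2) by simp
qed

lemma two_party_singular_second:
  fixes \<eta> :: "nat \<Rightarrow> state2"
  assumes W: "w_basis \<eta>" and dB: "det2 B \<noteq> 0" and dC: "det2 C \<noteq> 0"
    and O: "\<And>i k. i < 3 \<Longrightarrow> k < 3 \<Longrightarrow> i \<noteq> k \<Longrightarrow> inner2 (op2 B C (\<eta> i)) (op2 B C (\<eta> k)) = 0"
    and cm: "complete_meas Ks" and sg: "\<And>K. K \<in> set Ks \<Longrightarrow> det2 K = 0"
    and CO: "\<And>K i k. K \<in> set Ks \<Longrightarrow> i < 3 \<Longrightarrow> k < 3 \<Longrightarrow> i \<noteq> k \<Longrightarrow>
               inner2 (op_right K (op2 B C (\<eta> i))) (op_right K (op2 B C (\<eta> k))) = 0"
    and j: "j < 3"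
  shows "\<eta> j False True * \<eta> j True False = 0"
proof -
  have "swap2 (\<eta> j) False True * swap2 (\<eta> j) True False = 0"
  proof (rule two_party_singular_first[OF w_basis_swap2[OF W] dC dB _ cm sg _ j])
    show "inner2 (op2 C B (swap2 (\<eta> i))) (op2 C B (swap2 (\<eta> k))) = 0"
      if "i < 3" "k < 3" "i \<noteq> k" for i k
      using O[OF that] by (simp add: inner2_op2_swap2)
    show "inner2 (op_left K (op2 C B (swap2 (\<eta> i)))) (op_left K (op2 C B (swap2 (\<eta> k)))) = 0"
      if "K \<in> set Ks" "i < 3" "k < 3" "i \<noteq> k" for K i k
      using CO[OF that] by (simp add: op_right_op2_swap2 inner2_swap2)
  qed
  then show ?thesis by (simp add: swap2_def mult.commute)
qed

text \<open>A measurement by the first of the two entangled parties, in the two-party lemma: an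
  invertible outcome is absorbed into \<open>B\<close> (and the claim follows from the remaining protocol),
  otherwise all outcomes are rank-one.\<close>
lemma two_party_round_first:
  fixes \<eta> :: "nat \<Rightarrow> state2"
  assumes W: "w_basis \<eta>" and dB: "det2 B \<noteq> 0" and dC: "det2 C \<noteq> 0"
    and p: "p < 3" and x: "x \<noteq> (\<lambda>_. 0)"
    and O: "\<And>i k. i < 3 \<Longrightarrow> k < 3 \<Longrightarrow> i \<noteq> k \<Longrightarrow> inner2 (op2 B C (\<eta> i)) (op2 B C (\<eta> k)) = 0"
    and cm: "complete_meas (map fst ms)" and wf: "\<And>K q. (K, q) \<in> set ms \<Longrightarrow> wf_proto q"
    and corr: "\<And>K q k. (K, q) \<in> set ms \<Longrightarrow> k < 3 \<Longrightarrow>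
        correct (decoupled p x (op_left K (op2 B C (\<eta> k)))) k q"
    and IH: "\<And>K q B'. (K, q) \<in> set ms \<Longrightarrow> det2 B' \<noteq> 0 \<Longrightarrow>
        (\<And>k. k < 3 \<Longrightarrow> correct (decoupled p x (op2 B' C (\<eta> k))) k q) \<Longrightarrow>
        \<eta> j False True * \<eta> j True False = 0"
    and j: "j < 3"
  shows "\<eta> j False True * \<eta> j True False = 0"
proof (cases "\<exists>(K, q)\<in>set ms. det2 K \<noteq> 0")
  case True
  then obtain K q where Kq: "(K, q) \<in> set ms" "det2 K \<noteq> 0" by blast
  show ?thesis
    by (rule IH[OF Kq(1), of "qmult K B"])
       (use Kq(2) dB corr[OF Kq(1)] in \<open>simp_all add: det2_qmult op2_def op_left_op_left\<close>)
next
  case False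
  show ?thesis
  proof (rule two_party_singular_first[OF W dB dC O cm _ _ j])
    show "det2 K = 0" if "K \<in> set (map fst ms)" for K using False that by auto
    show "inner2 (op_left K (op2 B C (\<eta> i))) (op_left K (op2 B C (\<eta> k))) = 0"
      if "K \<in> set (map fst ms)" "i < 3" "k < 3" "i \<noteq> k" for K i k
      using that correct_orthogonal[OF wf corr corr] inner3_decoupled_eq_0[OF p x] by fastforce
  qed
qed

lemma two_party_round_second:
  fixes \<eta> :: "nat \<Rightarrow> state2"
  assumes W: "w_basis \<eta>" and dB: "det2 B \<noteq> 0" and dC: "det2 C \<noteq> 0"
    and p: "p < 3" and x: "x \<noteq> (\<lambda>_. 0)"
    and O: "\<And>i k. i < 3 \<Longrightarrow> k < 3 \<Longrightarrow> i \<noteq> k \<Longrightarrow> inner2 (op2 B C (\<eta> i)) (op2 B C (\<eta> k)) = 0"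
    and cm: "complete_meas (map fst ms)" and wf: "\<And>K q. (K, q) \<in> set ms \<Longrightarrow> wf_proto q"
    and corr: "\<And>K q k. (K, q) \<in> set ms \<Longrightarrow> k < 3 \<Longrightarrow>
        correct (decoupled p x (op_right K (op2 B C (\<eta> k)))) k q"
    and IH: "\<And>K q C'. (K, q) \<in> set ms \<Longrightarrow> det2 C' \<noteq> 0 \<Longrightarrow>
        (\<And>k. k < 3 \<Longrightarrow> correct (decoupled p x (op2 B C' (\<eta> k))) k q) \<Longrightarrow>
        \<eta> j False True * \<eta> j True False = 0"
    and j: "j < 3"
  shows "\<eta> j False True * \<eta> j True False = 0"
proof (cases "\<exists>(K, q)\<in>set ms. det2 K \<noteq> 0")
  case True
  then obtain K q where Kq: "(K, q) \<in> set ms" "det2 K \<noteq> 0" by blast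
  show ?thesis
    by (rule IH[OF Kq(1), of "qmult K C"])
       (use Kq(2) dC corr[OF Kq(1)] in
         \<open>simp_all add: det2_qmult op2_def op_right_op_right op_left_op_right\<close>)
next
  case False
  show ?thesis
  proof (rule two_party_singular_second[OF W dB dC O cm _ _ j])
    show "det2 K = 0" if "K \<in> set (map fst ms)" for K using False that by auto
    show "inner2 (op_right K (op2 B C (\<eta> i))) (op_right K (op2 B C (\<eta> k))) = 0"
      if "K \<in> set (map fst ms)" "i < 3" "k < 3" "i \<noteq> k" for K i k
      using that correct_orthogonal[OF wf corr corr] inner3_decoupled_eq_0[OF p x] by fastforce
  qed
qed

text \<open>Two-party lemma: if one party is decoupled and the other two share three states forming a
  basis of \<open>span{|00\<rangle>, |10\<rangle>, |01\<rangle>}\<close> (up to invertible local operators), and these are perfectly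
  distinguished by an LOCC protocol, then every one of them is a product state.\<close>
lemma two_party_product:
  fixes \<eta> :: "nat \<Rightarrow> state2"
  assumes "wf_proto P" and p: "p < 3" and W: "w_basis \<eta>" and j: "j < 3"
  shows "x \<noteq> (\<lambda>_. 0) \<Longrightarrow> det2 B \<noteq> 0 \<Longrightarrow> det2 C \<noteq> 0 \<Longrightarrow>
    (\<And>k. k < 3 \<Longrightarrow> correct (decoupled p x (op2 B C (\<eta> k))) k P) \<Longrightarrow>
    \<eta> j False True * \<eta> j True False = 0"
  using assms(1)
proof (induction P arbitrary: x B C rule: wf_proto.induct)
  case (1 g)
  (* at a leaf all three states are nonzero, so the single guess would have to be 0, 1 and 2 *)
  have "g = k" if "k < 3" for k
    using 1(4)[OF that] decoupled_nonzero[OF p 1(1) op2_nonzero[OF 1(2,3) w_basis_nonzero[OF W that]]]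
    by (auto elim: correct.cases)
  then have "g = 0" "g = 1" by auto
  then show ?case by simp
next
  case (2 p' ms)
  let ?s = "\<lambda>x B C k. decoupled p x (op2 B C (\<eta> k))"
  have wf: "wf_proto q" if "(K, q) \<in> set ms" for K q using 2(3) that by auto
  have IH: "\<eta> j False True * \<eta> j True False = 0"
    if "(K, q) \<in> set ms" "x' \<noteq> (\<lambda>_. 0)" "det2 B' \<noteq> 0" "det2 C' \<noteq> 0"
       "\<And>k. k < 3 \<Longrightarrow> correct (?s x' B' C' k) k q" for K q x' B' C'
    using 2(3) that by fastforce
  have branch: "correct (apply_local p' K (?s x B C k)) k q" if "(K, q) \<in> set ms" "k < 3" for K q k
    using correct_Measure_branch[OF 2(7)[OF that(2)] that(1)] .
  have O: "inner2 (op2 B C (\<eta> i)) (op2 B C (\<eta> k)) = 0" if "i < 3" "k < 3" "i \<noteq> k" for i k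
    by (rule inner3_decoupled_eq_0[OF p 2(4)])
       (use correct_orthogonal[OF _ 2(7)[OF that(1)] 2(7)[OF that(2)] that(3)] 2(1,2,3) in
         \<open>auto intro: wf_proto.intros\<close>)
  consider (same) "p' = p" | (first) "p' = first_other p" | (second) "p' = second_other p"
    using party_cases[OF p 2(1)] by blast
  then show ?case
  proof cases
    case same
    text \<open>The decoupled party measures: some outcome leaves its qubit nonzero.\<close>
    obtain K where K: "K \<in> set (map fst ms)" "apply_local p K (?s x B C 0) \<noteq> (\<lambda>_. 0)"
      using exists_nonzero_branch[OF 2(2) decoupled_nonzero[OF p 2(4) op2_nonzero[OF 2(5,6)
            w_basis_nonzero[OF W]]]] same by fastforce
    then obtain q where Kq: "(K, q) \<in> set ms" by auto
    have "qapply K x \<noteq> (\<lambda>_. 0)"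
      using K(2) apply_local_decoupled_self[OF p] decoupled_zero by metis
    then show ?thesis
      using IH[OF Kq _ 2(5,6)] branch[OF Kq] same by (simp add: apply_local_decoupled_self[OF p])
  next
    case first
    show ?thesis
      by (rule two_party_round_first[OF W 2(5,6) p 2(4) O 2(2) wf _ _ j])
         (use branch first IH 2(4,6) in \<open>simp_all add: apply_local_decoupled_first[OF p]\<close>)
  next
    case second
    show ?thesis
      by (rule two_party_round_second[OF W 2(5,6) p 2(4) O 2(2) wf _ _ j])
         (use branch second IH 2(4,5) in \<open>simp_all add: apply_local_decoupled_second[OF p]\<close>)
  qed
qed

section \<open>Branch states of the three-party problem\<close>

text \<open>Contracting party \<open>p\<close> of a state with amplitudes \<open>\<alpha>\<close> at \<open>|000\<rangle>\<close>, \<open>P\<close> at the excitation of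
  party \<open>p\<close> and \<open>Q\<close>, \<open>R\<close> at the excitations of the two other parties (and no other amplitudes)
  with a covector \<open>\<rho>\<close> leaves this two-qubit state of the other parties.\<close>
definition branch_state :: "(bool \<Rightarrow> complex) \<Rightarrow> (nat \<Rightarrow> complex) \<Rightarrow> (nat \<Rightarrow> complex) \<Rightarrow>
    (nat \<Rightarrow> complex) \<Rightarrow> (nat \<Rightarrow> complex) \<Rightarrow> nat \<Rightarrow> state2" where
  "branch_state \<rho> \<alpha> P Q R j = (\<lambda>b c. if b then (if c then 0 else \<rho> False * Q j)
       else (if c then \<rho> False * R j else \<rho> False * \<alpha> j + \<rho> True * P j))"

lemma branch_state_swap2: "branch_state \<rho> \<alpha> P R Q j = swap2 (branch_state \<rho> \<alpha> P Q R j)"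
  by (simp add: branch_state_def swap2_def fun_eq_iff)

text \<open>For \<open>\<rho> False \<noteq> 0\<close> the branch states form a basis: their determinant is
  \<open>\<rho> False ^ 3 * det_rows \<alpha> Q R\<close>.\<close>
lemma w_basis_branch_state:
  assumes "\<And>j. P j = u * Q j + v * R j" and "\<rho> False \<noteq> 0" and "det_rows \<alpha> Q R \<noteq> 0"
  shows "w_basis (branch_state \<rho> \<alpha> P Q R)"
proof -
  have "det_rows (\<lambda>j. branch_state \<rho> \<alpha> P Q R j False False) (\<lambda>j. branch_state \<rho> \<alpha> P Q R j True False)
     (\<lambda>j. branch_state \<rho> \<alpha> P Q R j False True) = \<rho> False ^ 3 * det_rows \<alpha> Q R"
    by (simp add: det_rows_def branch_state_def assms(1) power3_eq_cube algebra_simps)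
  then show ?thesis using assms(2,3) by (simp add: w_basis_def branch_state_def)
qed

lemma branch_orthogonality:
  fixes \<alpha> P Q R :: "nat \<Rightarrow> complex"
  assumes z: "R a = 0" "R b = 0" "Q c = 0"
    and PQR: "\<And>j. P j = u * Q j + v * R j" and u: "u \<noteq> 0"
    and ind: "\<alpha> a * Q b - \<alpha> b * Q a \<noteq> 0"
    and dB: "det2 B \<noteq> 0"
    and oa: "inner2 (op2 B C (branch_state \<rho> \<alpha> P Q R a)) (op2 B C (branch_state \<rho> \<alpha> P Q R c)) = 0"
    and ob: "inner2 (op2 B C (branch_state \<rho> \<alpha> P Q R b)) (op2 B C (branch_state \<rho> \<alpha> P Q R c)) = 0"
  shows "\<rho> False * (gram C False False * \<alpha> c + gram C False True * R c) + \<rho> True * (gram C False False * P c) = 0"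
    (is "?F = 0")
proof (rule ccontr)
  assume Fn: "?F \<noteq> 0"
  define m where "m j = (\<lambda>x. if x then \<rho> False * Q j else \<rho> False * \<alpha> j + \<rho> True * P j)" for j
  have dec: "inner2 (op2 B C (branch_state \<rho> \<alpha> P Q R j)) (op2 B C (branch_state \<rho> \<alpha> P Q R c)) =
      inner1 (m j) (\<lambda>x. gram B x False) * ?F" if "R j = 0" for j
    using inner2_op2_first_column[of "branch_state \<rho> \<alpha> P Q R j" B C "branch_state \<rho> \<alpha> P Q R c"] that z(3)
    by (simp add: branch_state_def m_def inner1_expand qapply_def gram_def sum_qubit algebra_simps)
  have ma: "inner1 (m a) (\<lambda>x. gram B x False) = 0" using oa dec[OF z(1)] Fn by simp
  have mb: "inner1 (m b) (\<lambda>x. gram B x False) = 0" using ob dec[OF z(2)] Fn by simp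
  show False
  proof (cases "\<rho> False = 0")
    case False
    have "m a False * m b True - m b False * m a True = \<rho> False * \<rho> False * (\<alpha> a * Q b - \<alpha> b * Q a)"
      using PQR[of a] PQR[of b] z(1,2) by (simp add: m_def algebra_simps)
    then have "m a False * m b True - m b False * m a True \<noteq> 0" using False ind by simp
    then have "(\<lambda>x. gram B x False) = (\<lambda>_. 0)" using orthogonal_to_independent_eq_0[OF ma mb] by blast
    then show False using gram_diag_nonzero[OF dB] by (metis fun_cong)
  next
    case True
    then have "\<rho> True \<noteq> 0" using Fn by simp
    moreover have "cnj (\<rho> True * P j) * gram B False False = 0" if "inner1 (m j) (\<lambda>x. gram B x False) = 0" for j
      using that True by (simp add: m_def inner1_expand gram_def sum_qubit)
    ultimately have "P a = 0" "P b = 0" using ma mb gram_diag_nonzero[OF dB] by simp_all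
    then have "Q a = 0" "Q b = 0" using PQR[of a] PQR[of b] z(1,2) u by simp_all
    then show False using ind by simp
  qed
qed

lemma rank_one_round_separated:
  fixes \<alpha> P Q R :: "nat \<Rightarrow> complex"
  assumes abc: "a < 3" "b < 3" "c < 3" "a \<noteq> c" "b \<noteq> c"
    and z: "R a = 0" "R b = 0" "Q c = 0" "R c \<noteq> 0"
    and PQR: "\<And>j. P j = u * Q j + v * R j" and uv: "u \<noteq> 0" "v \<noteq> 0"
    and ind: "\<alpha> a * Q b - \<alpha> b * Q a \<noteq> 0"
    and dA: "det2 A \<noteq> 0" and dB: "det2 B \<noteq> 0" and dC: "det2 C \<noteq> 0"
    and S: "gram_resolution ch A"
    and CO: "\<And>w \<rho> i k. (w, \<rho>) \<in> set ch \<Longrightarrow> w \<noteq> 0 \<Longrightarrow> i < 3 \<Longrightarrow> k < 3 \<Longrightarrow> i \<noteq> k \<Longrightarrow>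
         inner2 (op2 B C (branch_state \<rho> \<alpha> P Q R i)) (op2 B C (branch_state \<rho> \<alpha> P Q R k)) = 0"
  shows False
proof -
  define X0 where "X0 = gram C False False * \<alpha> c + gram C False True * R c"
  define X1 where "X1 = gram C False False * P c"
  have "(\<lambda>x. if x then X1 else X0) = (\<lambda>_. 0)"
  proof (rule gram_resolution_annihilated[OF S dA])
    fix w \<rho> assume wr: "(w, \<rho>) \<in> set ch" "w \<noteq> 0"
    show "\<rho> False * (if False then X1 else X0) + \<rho> True * (if True then X1 else X0) = 0"
      using branch_orthogonality[OF z(1-3) PQR uv(1) ind dB CO[OF wr abc(1,3,4)] CO[OF wr abc(2,3,5)]]
      by (simp add: X0_def X1_def)
  qed
  from fun_cong[OF this, of True] have "X1 = 0" by simp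
  then have "P c = 0" using gram_diag_nonzero[OF dC] by (simp add: X1_def)
  then show False using PQR[of c] z(3,4) uv(2) by simp
qed

lemma rank_one_round_product_impossible:
  fixes \<alpha> P Q R :: "nat \<Rightarrow> complex"
  assumes PQR: "\<And>j. P j = u * Q j + v * R j" and uv: "u \<noteq> 0" "v \<noteq> 0"
    and D: "det_rows \<alpha> Q R \<noteq> 0"
    and dA: "det2 A \<noteq> 0" and dB: "det2 B \<noteq> 0" and dC: "det2 C \<noteq> 0"
    and S: "gram_resolution ch A"
    and CO: "\<And>w \<rho> i k. (w, \<rho>) \<in> set ch \<Longrightarrow> w \<noteq> 0 \<Longrightarrow> i < 3 \<Longrightarrow> k < 3 \<Longrightarrow> i \<noteq> k \<Longrightarrow>
         inner2 (op2 B C (branch_state \<rho> \<alpha> P Q R i)) (op2 B C (branch_state \<rho> \<alpha> P Q R k)) = 0"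
    and PROD: "\<And>w \<rho> j. (w, \<rho>) \<in> set ch \<Longrightarrow> w \<noteq> 0 \<Longrightarrow> \<rho> False \<noteq> 0 \<Longrightarrow> j < 3 \<Longrightarrow> Q j * R j = 0"
  shows False
proof -
  obtain w0 \<rho>0 where w0: "(w0, \<rho>0) \<in> set ch" "w0 \<noteq> 0" "\<rho>0 False \<noteq> 0"
    using gram_resolution_first_nonzero[OF S dA] by blast
  have QR: "Q j * R j = 0" if "j < 3" for j using PROD[OF w0 that] .
  have "\<exists>c1<3. R c1 \<noteq> 0" using D det_rows_zero_col[of R \<alpha> Q] by auto
  then obtain c1 where c1: "c1 < 3" "R c1 \<noteq> 0" by blast
  have D': "det_rows \<alpha> R Q \<noteq> 0" using D det_rows_swap[of \<alpha> R Q] by simp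
  have "\<exists>c2<3. Q c2 \<noteq> 0" using D' det_rows_zero_col[of Q \<alpha> R] by auto
  then obtain c2 where c2: "c2 < 3" "Q c2 \<noteq> 0" by blast
  have Qc1: "Q c1 = 0" and Rc2: "R c2 = 0" using QR c1 c2 by auto
  then have c12: "c1 \<noteq> c2" using c2(2) by auto
  define m where "m = 3 - c1 - c2"
  have m: "m < 3" "m \<noteq> c1" "m \<noteq> c2"
    using less3_cases[OF c1(1)] less3_cases[OF c2(1)] c12 by (auto simp: m_def)
  show False
  proof (cases "R m = 0")
    case True
    have ind: "\<alpha> c2 * Q m - \<alpha> m * Q c2 \<noteq> 0"
      using det_rows_minor[OF D c2(1) m(1) _ Rc2 True] m(3) by simp
    show False
      by (rule rank_one_round_separated[where a = c2 and b = m and c = c1 and Q = Q and R = R and u = u and v = v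
            and B = B and C = C])
         (fact c2(1) m(1) c1(1) c12[symmetric] m(2) Rc2 True Qc1 c1(2) PQR uv ind dA dB dC S CO)+
  next
    case False
    text \<open>Exchanging the roles of \<open>Q\<close> and \<open>R\<close> (and of the two remaining qubits).\<close>
    then have Qm: "Q m = 0" using QR[OF m(1)] by simp
    have ind: "\<alpha> c1 * R m - \<alpha> m * R c1 \<noteq> 0"
      using det_rows_minor[OF D' c1(1) m(1) _ Qc1 Qm] m(2) by simp
    have PRQ: "P j = v * R j + u * Q j" for j using PQR[of j] by (simp add: algebra_simps)
    have CO': "inner2 (op2 C B (branch_state \<rho> \<alpha> P R Q i)) (op2 C B (branch_state \<rho> \<alpha> P R Q k)) = 0"
      if "(w, \<rho>) \<in> set ch" "w \<noteq> 0" "i < 3" "k < 3" "i \<noteq> k" for w \<rho> i k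
      using CO[OF that] by (simp only: branch_state_swap2[of \<rho> \<alpha> P Q R] inner2_op2_swap2)
    show False
      by (rule rank_one_round_separated[where a = c1 and b = m and c = c2 and Q = R and R = Q and u = v and v = u
            and B = C and C = B])
         (fact c1(1) m(1) c2(1) c12 m(3) Qc1 Qm Rc2 c2(2) PRQ uv ind dA dC dB S CO')+
  qed
qed

lemma rank_one_round_impossible:
  fixes \<alpha> P Q R :: "nat \<Rightarrow> complex"
  assumes p: "p < 3" and PQR: "\<And>j. P j = u * Q j + v * R j" and uv: "u \<noteq> 0" "v \<noteq> 0"
    and D: "det_rows \<alpha> Q R \<noteq> 0"
    and dA: "det2 A \<noteq> 0" and dB: "det2 B \<noteq> 0" and dC: "det2 C \<noteq> 0"
    and cm: "complete_meas (map fst ms)"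
    and sg: "\<And>K q. (K, q) \<in> set ms \<Longrightarrow> det2 K = 0"
    and wf: "\<And>K q. (K, q) \<in> set ms \<Longrightarrow> wf_proto q"
    and corr: "\<And>K q j. (K, q) \<in> set ms \<Longrightarrow> j < 3 \<Longrightarrow>
        correct (decoupled p (left_factor K) (op2 B C (branch_state (row_mult (right_factor K) A) \<alpha> P Q R j))) j q"
  shows False
proof -
  let ?ch = "rank_one_branches (map fst ms) A"
  have S: "gram_resolution ?ch A"
    by (rule gram_resolution_rank_one_branches[OF cm]) (use sg in auto)
  have branch: "\<exists>K q. (K, q) \<in> set ms \<and> left_factor K \<noteq> (\<lambda>_. 0) \<and> \<rho> = row_mult (right_factor K) A"
    if "(w, \<rho>) \<in> set ?ch" "w \<noteq> 0" for w \<rho>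
    using rank_one_branches_memD[OF that(1)] that(2) by (force simp: inner1_def)
  show False
  proof (rule rank_one_round_product_impossible[OF PQR uv D dA dB dC S])
    show "inner2 (op2 B C (branch_state \<rho> \<alpha> P Q R i)) (op2 B C (branch_state \<rho> \<alpha> P Q R k)) = 0"
      if "(w, \<rho>) \<in> set ?ch" "w \<noteq> 0" "i < 3" "k < 3" "i \<noteq> k" for w \<rho> i k
      using branch[OF that(1,2)] correct_orthogonal[OF wf corr corr] inner3_decoupled_eq_0[OF p] that(3-5)
      by blast
    show "Q j * R j = 0" if wr: "(w, \<rho>) \<in> set ?ch" "w \<noteq> 0" "\<rho> False \<noteq> 0" "j < 3" for w \<rho> j
    proof -
      obtain K q where K: "(K, q) \<in> set ms" "left_factor K \<noteq> (\<lambda>_. 0)" "\<rho> = row_mult (right_factor K) A"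
        using branch[OF wr(1,2)] by blast
      have "branch_state \<rho> \<alpha> P Q R j False True * branch_state \<rho> \<alpha> P Q R j True False = 0"
        by (rule two_party_product[OF wf[OF K(1)] p w_basis_branch_state[where \<rho> = \<rho> and \<alpha> = \<alpha>, OF PQR wr(3) D] wr(4) K(2) dB dC])
           (use corr[OF K(1)] K(3) in simp)
      then show ?thesis using wr(3) by (auto simp: branch_state_def)
    qed
  qed
qed

section \<open>The subspace S3\<close>

definition excitation :: "nat \<Rightarrow> bool \<times> bool \<times> bool" where
  "excitation p = (p = 0, p = 1, p = 2)"

definition amp :: "(nat \<Rightarrow> state) \<Rightarrow> bool \<times> bool \<times> bool \<Rightarrow> nat \<Rightarrow> complex" where
  "amp \<psi> x j = (if j < 3 then \<psi> j x else 0)"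

lemma S3_memD:
  assumes "v \<in> S3"
  shows "v (True, True, False) = 0" "v (True, False, True) = 0" "v (False, True, True) = 0"
    "v (True, True, True) = 0"
    and "v (True, False, False) + v (False, True, False) = 2 * v (False, False, True)"
  using assms by (auto simp: S3_def ket_def)

lemma contract_party_S3:
  assumes "p < 3" "j < 3" "\<psi> j \<in> S3"
  shows "contract_party p \<rho> (\<psi> j) = branch_state \<rho> (amp \<psi> (False, False, False)) (amp \<psi> (excitation p))
           (amp \<psi> (excitation (first_other p))) (amp \<psi> (excitation (second_other p))) j"
  using less3_cases[OF assms(1)] S3_memD[OF assms(3)] assms(2)
  by (auto simp: contract_party_def branch_state_def amp_def excitation_def first_other_def second_other_def
      fun_eq_iff all_bool_eq)

lemma det_rows_linear_last:
  "det_rows \<alpha> Q (\<lambda>j. x * A j + y * B j) = x * det_rows \<alpha> Q A + y * det_rows \<alpha> Q B"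
  by (simp add: det_rows_def algebra_simps)

lemma det_rows_equal_cols: "det_rows \<alpha> Q Q = 0"
  by (simp add: det_rows_def algebra_simps)

lemma S3_excitations:
  assumes S: "\<forall>j<3. \<psi> j \<in> S3" and p: "p < 3"
    and D: "det_rows (amp \<psi> (False, False, False)) (amp \<psi> (excitation 0)) (amp \<psi> (excitation 1)) \<noteq> 0"
  obtains u v where "u \<noteq> 0" "v \<noteq> 0"
    "\<And>j. amp \<psi> (excitation p) j = u * amp \<psi> (excitation (first_other p)) j + v * amp \<psi> (excitation (second_other p)) j"
    "det_rows (amp \<psi> (False, False, False)) (amp \<psi> (excitation (first_other p)))
       (amp \<psi> (excitation (second_other p))) \<noteq> 0"
proof -
  let ?a = "amp \<psi> (False, False, False)" and ?E = "\<lambda>p. amp \<psi> (excitation p)"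
  have E2: "?E 2 j = 1 / 2 * ?E 0 j + 1 / 2 * ?E 1 j" for j
    using S3_memD(5)[of "\<psi> j"] S by (auto simp: amp_def excitation_def field_simps)
  then have E2': "?E 2 = (\<lambda>j. 1 / 2 * ?E 0 j + 1 / 2 * ?E 1 j)" by (rule ext)
  consider "p = 0" | "p = 1" | "p = 2" using p by linarith
  then show thesis
  proof cases
    case 1
    have "det_rows ?a (?E 1) (?E 2) = - 1 / 2 * det_rows ?a (?E 0) (?E 1)"
      unfolding E2' det_rows_linear_last det_rows_equal_cols using det_rows_swap[of ?a "?E 0" "?E 1"] by simp
    then have "det_rows ?a (?E 1) (?E 2) \<noteq> 0" using D by simp
    moreover have "?E 0 j = - 1 * ?E 1 j + 2 * ?E 2 j" for j using E2[of j] by simp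
    ultimately show thesis using that[of "- 1" 2] 1 by (simp add: first_other_def second_other_def)
  next
    case 2
    have "det_rows ?a (?E 0) (?E 2) = 1 / 2 * det_rows ?a (?E 0) (?E 1)"
      unfolding E2' det_rows_linear_last det_rows_equal_cols by simp
    then have "det_rows ?a (?E 0) (?E 2) \<noteq> 0" using D by auto
    moreover have "?E 1 j = - 1 * ?E 0 j + 2 * ?E 2 j" for j using E2[of j] by simp
    ultimately show thesis using that[of "- 1" 2] 2 by (simp add: first_other_def second_other_def)
  next
    case 3
    then show thesis using that[of "1 / 2" "1 / 2"] D E2 by (simp add: first_other_def second_other_def)
  qed
qed

lemma local3_rank_one_outcome:
  assumes p: "p < 3" and K: "det2 K = 0" and j: "j < 3" "\<psi> j \<in> S3"
  shows "local3 (F(p := qmult K (F p))) (\<psi> j) =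
    decoupled p (left_factor K) (op2 (F (first_other p)) (F (second_other p))
      (branch_state (row_mult (right_factor K) (F p)) (amp \<psi> (False, False, False)) (amp \<psi> (excitation p))
         (amp \<psi> (excitation (first_other p))) (amp \<psi> (excitation (second_other p))) j))"
proof -
  have "qmult K (F p) = outer (left_factor K) (row_mult (right_factor K) (F p))"
    using outer_factors[OF K] qmult_outer by metis
  moreover have "first_other p \<noteq> p" "second_other p \<noteq> p"
    by (auto simp: first_other_def second_other_def)
  ultimately show ?thesis
    using local3_rank_one[OF p, of "F(p := qmult K (F p))"] contract_party_S3[where \<psi> = \<psi>, OF p j] by simp
qed

text \<open>Outcomes with invertible Kraus operators are absorbed into \<open>F\<close>; the first round with only
  rank-one outcomes is impossible by \<open>rank_one_round_impossible\<close>.\<close>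
lemma three_party_indistinguishable:
  assumes "wf_proto P" and S: "\<forall>j<3. \<psi> j \<in> S3"
    and D: "det_rows (amp \<psi> (False, False, False)) (amp \<psi> (excitation 0)) (amp \<psi> (excitation 1)) \<noteq> 0"
  shows "\<forall>p<3. det2 (F p) \<noteq> 0 \<Longrightarrow> \<forall>j<3. correct (local3 F (\<psi> j)) j P \<Longrightarrow> False"
  using assms(1)
proof (induction P arbitrary: F rule: wf_proto.induct)
  case (1 g)
  (* at a leaf all three states are nonzero, so the single guess would have to be 0, 1 and 2 *)
  have "g = k" if k: "k < 3" for k
  proof -
    have "\<psi> k \<noteq> (\<lambda>_. 0)"
      using D det_rows_zero_row[OF k] k by (auto simp: amp_def)
    then have "local3 F (\<psi> k) \<noteq> (\<lambda>_. 0)" by (rule local3_nonzero[OF 1(1)])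
    moreover have "correct (local3 F (\<psi> k)) k (Guess g)" using 1(2) k by blast
    ultimately show ?thesis by (auto elim: correct.cases)
  qed
  then have "g = 0" "g = 1" by auto
  then show ?case by simp
next
  case (2 p ms)
  have branch: "correct (local3 (F(p := qmult K (F p))) (\<psi> k)) k q" if "(K, q) \<in> set ms" "k < 3" for K q k
  proof -
    have "correct (apply_local p K (local3 F (\<psi> k))) k q"
      by (rule correct_Measure_branch[OF _ that(1)]) (use 2(5) that(2) in blast)
    then show ?thesis by (simp only: local3_absorb[OF 2(1)])
  qed
  show False
  proof (cases "\<exists>(K, q)\<in>set ms. det2 K \<noteq> 0")
    case True
    then obtain K q where Kq: "(K, q) \<in> set ms" "det2 K \<noteq> 0" by blast
    have "\<forall>p'<3. det2 ((F(p := qmult K (F p))) p') \<noteq> 0" using 2(4) Kq(2) by (simp add: det2_qmult)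
    moreover have "wf_proto q \<and> (\<forall>F. (\<forall>p<3. det2 (F p) \<noteq> 0) \<longrightarrow>
        (\<forall>j<3. correct (local3 F (\<psi> j)) j q) \<longrightarrow> False)"
      using 2(3) Kq(1) by blast
    ultimately show False using branch[OF Kq(1)] by blast
  next
    case False
    let ?a = "amp \<psi> (False, False, False)" and ?E = "\<lambda>p. amp \<psi> (excitation p)"
    obtain u v where uv: "u \<noteq> 0" "v \<noteq> 0"
      and PQR: "\<And>j. ?E p j = u * ?E (first_other p) j + v * ?E (second_other p) j"
      and D': "det_rows ?a (?E (first_other p)) (?E (second_other p)) \<noteq> 0"
      using S3_excitations[OF S 2(1) D] by blast
    have lt: "first_other p < 3" "second_other p < 3" by (auto simp: first_other_def second_other_def)
    show False
    proof (rule rank_one_round_impossible[OF 2(1) PQR uv D' _ _ _ 2(2)])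
      show "det2 (F p) \<noteq> 0" "det2 (F (first_other p)) \<noteq> 0" "det2 (F (second_other p)) \<noteq> 0"
        using 2(1,4) lt by auto
      show "det2 K = 0" if "(K, q) \<in> set ms" for K q using False that by auto
      show "wf_proto q" if "(K, q) \<in> set ms" for K q using 2(3) that by auto
      show "correct (decoupled p (left_factor K) (op2 (F (first_other p)) (F (second_other p))
          (branch_state (row_mult (right_factor K) (F p)) ?a (?E p) (?E (first_other p)) (?E (second_other p)) j))) j q"
        if Kq: "(K, q) \<in> set ms" "j < 3" for K q j
      proof -
        have "det2 K = 0" using False Kq(1) by auto
        from local3_rank_one_outcome[where \<psi> = \<psi> and F = F, OF 2(1) this Kq(2) S[rule_format, OF Kq(2)]]
        show ?thesis using branch[OF Kq] by simp
      qed
    qed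
  qed
qed

lemma sum_less3: "(\<Sum>i<(3::nat). f i) = f 0 + f 1 + (f 2 :: complex)"
  by (simp add: eval_nat_numeral)

lemma det_rows_mult:
  "det_rows (\<lambda>k. \<Sum>i<3. c k i * \<alpha> i) (\<lambda>k. \<Sum>i<3. c k i * Q i) (\<lambda>k. \<Sum>i<3. c k i * R i) =
     det_rows (\<lambda>k. c k 0) (\<lambda>k. c k 1) (\<lambda>k. c k 2) * det_rows \<alpha> Q R"
  unfolding det_rows_def sum_less3 by algebra

text \<open>An orthonormal basis of \<open>S3\<close> has independent amplitudes at \<open>|000\<rangle>, |100\<rangle>, |010\<rangle>\<close>: the vectors
  \<open>|000\<rangle>, |100\<rangle> - |010\<rangle>, |100\<rangle> + |010\<rangle> + |001\<rangle>\<close> of \<open>S3\<close> are combinations of the basis, and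
  their amplitudes there form a matrix of determinant 2.\<close>
lemma S3_onb_independent:
  assumes onb: "is_onb S3 3 \<psi>"
  shows "det_rows (amp \<psi> (False, False, False)) (amp \<psi> (excitation 0)) (amp \<psi> (excitation 1)) \<noteq> 0"
proof -
  define e :: "nat \<Rightarrow> state" where "e k = (\<lambda>x. (if k = 0 then 1 else 0) * ket False False False x
      + (if k = 1 then 1 else 0) * (ket True False False x - ket False True False x)
      + (if k = 2 then 1 else 0) * (ket True False False x + ket False True False x + ket False False True x))" for k
  have "\<forall>k. \<exists>c. k < 3 \<longrightarrow> e k = (\<lambda>x. \<Sum>i<3. c i * \<psi> i x)"
  proof
    fix k
    have "e k \<in> S3" unfolding S3_def e_def by blast
    then show "\<exists>c. k < 3 \<longrightarrow> e k = (\<lambda>x. \<Sum>i<3. c i * \<psi> i x)"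
      using onb by (auto simp: is_onb_def)
  qed
  then obtain c where c: "\<And>k. k < 3 \<Longrightarrow> e k = (\<lambda>x. \<Sum>i<3. c k i * \<psi> i x)" by metis
  have col: "e k x = (\<Sum>i<3. c k i * amp \<psi> x i)" if "k < 3" for k x
    using c[OF that] by (simp add: amp_def)
  have "2 = det_rows (\<lambda>k. e k (False, False, False)) (\<lambda>k. e k (True, False, False)) (\<lambda>k. e k (False, True, False))"
    by (simp add: det_rows_def e_def ket_def)
  also have "\<dots> = det_rows (\<lambda>k. \<Sum>i<3. c k i * amp \<psi> (False, False, False) i)
      (\<lambda>k. \<Sum>i<3. c k i * amp \<psi> (True, False, False) i) (\<lambda>k. \<Sum>i<3. c k i * amp \<psi> (False, True, False) i)"
    by (simp add: det_rows_def col)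
  also have "\<dots> = det_rows (\<lambda>k. c k 0) (\<lambda>k. c k 1) (\<lambda>k. c k 2) *
      det_rows (amp \<psi> (False, False, False)) (amp \<psi> (excitation 0)) (amp \<psi> (excitation 1))"
    by (simp add: det_rows_mult excitation_def)
  finally show ?thesis by auto
qed

theorem theorem6:
  shows "\<forall>\<psi>. is_onb S3 3 \<psi> \<longrightarrow> \<not> LOCC_distinguishable 3 \<psi>"
proof (intro allI impI notI)
  fix \<psi> assume onb: "is_onb S3 3 \<psi>" and "LOCC_distinguishable 3 \<psi>"
  then obtain P where P: "wf_proto P" "\<forall>j<3. correct (\<psi> j) j P"
    unfolding LOCC_distinguishable_def by blast
  have S: "\<forall>j<3. \<psi> j \<in> S3" using onb by (simp add: is_onb_def)
  show False
    by (rule three_party_indistinguishable[OF P(1) S S3_onb_independent[OF onb], of "\<lambda>_. id2"])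
       (simp_all add: det2_id2 local3_id2 P(2))
qed

end
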